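(* Let $\mathcal H_S,\mathcal H_E$ be finite-dimensional Hilbert spaces, $|\psi_i\rangle\in\mathcal H_S$ and $|\phi_i^E\rangle\in\mathcal H_E$ unit vectors, $x\mapsto U_x^{SE}$ a continuously differentiable family of unitaries on $\mathcal H_S\otimes\mathcal H_E$, and $\{|\pi_\omega^E\rangle\}_{\omega\in\Omega}$ an orthonormal basis of $\mathcal H_E$, with $\Omega$ partitioned into a retained set $\checkmark$ and a discarded set $\times$. Assume the perpendicular gauge condition $\langle \Psi_x^{SE}|\partial_x\Psi_x^{SE}\rangle=0$. Suppose that (i) $\langle\tilde\psi_{x|\omega}|\partial_x\tilde\psi_{x|\omega}\rangle=0$ for all $\omega\in\checkmark$; (ii) $|\partial_x\tilde\psi_{x|\omega}\rangle=0$ for all $\omega\in\times$; and that $p(\omega|x)>0$ for every $\omega\in\checkmark$ with $|\partial_x\tilde\psi_{x|\omega}\rangle\neq0$. Then the measurement encoding is lossless, i.e. $$\sum_{\omega\in\checkmark,\ p(\omega|x)>0} p(\omega|x)\,I(\sigma_{x|\omega}) = I(|\Psi_x^{SE}\rangle).$$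
   Context: Setup: $|\Psi_x^{SE}\rangle=U_x^{SE}(|\psi_i\rangle\otimes|\phi_i^E\rangle)$. Kraus (measurement) operators on $\mathcal H_S$: $M_{\omega,x}=\langle\pi_\omega^E|U_x^{SE}|\phi_i^E\rangle$ (partial inner product over the environment). $|\tilde\psi_{x|\omega}\rangle=M_{\omega,x}|\psi_i\rangle$, $p(\omega|x)=\langle\tilde\psi_{x|\omega}|\tilde\psi_{x|\omega}\rangle$, and for $p(\omega|x)>0$ the post-selected state is the pure state $\sigma_{x|\omega}=|\tilde\psi_{x|\omega}\rangle\langle\tilde\psi_{x|\omega}|/p(\omega|x)$. For a pure state $|\phi_x\rangle$ (normalized), the quantum Fisher information is $I(|\phi_x\rangle)=4(\langle\partial_x\phi_x|\partial_x\phi_x\rangle-|\langle\phi_x|\partial_x\phi_x\rangle|^2)$; $I(\sigma_{x|\omega})$ is the QFI of the normalized pure state $\tilde\psi_{x|\omega}/\sqrt{p(\omega|x)}$. $I^Q:=I(|\Psi_x^{SE}\rangle)$. *)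

theory Defs
  imports "HOL-Analysis.Analysis"
begin

text \<open>Finite-dimensional Hilbert spaces are modelled in coordinates: a vector of a space
  with orthonormal coordinate index type 'i (finite) is a function 'i => complex.
  H_S has index type 's, H_E index type 'e, and H_S (x) H_E has index type 's \<times> 'e.
  Operators on H_S (x) H_E are matrices ('s \<times> 'e) => ('s \<times> 'e) => complex.\<close>

definition cinner :: "('i::finite \<Rightarrow> complex) \<Rightarrow> ('i \<Rightarrow> complex) \<Rightarrow> complex" where
  "cinner u v = (\<Sum>i\<in>UNIV. cnj (u i) * v i)"

definition unit_vec :: "('i::finite \<Rightarrow> complex) \<Rightarrow> bool" where
  "unit_vec v \<longleftrightarrow> cinner v v = 1"

definition unitary_mat :: "('i::finite \<Rightarrow> 'i \<Rightarrow> complex) \<Rightarrow> bool" where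
  "unitary_mat U \<longleftrightarrow>
     (\<forall>a b. (\<Sum>c\<in>UNIV. cnj (U c a) * U c b) = (if a = b then 1 else 0)) \<and>
     (\<forall>a b. (\<Sum>c\<in>UNIV. U a c * cnj (U b c)) = (if a = b then 1 else 0))"

definition orthonormal_basis :: "('w::finite \<Rightarrow> 'e::finite \<Rightarrow> complex) \<Rightarrow> bool" where
  "orthonormal_basis \<pi> \<longleftrightarrow>
     (\<forall>\<omega> \<omega>'. cinner (\<pi> \<omega>) (\<pi> \<omega>') = (if \<omega> = \<omega>' then 1 else 0)) \<and>
     (\<forall>v. \<exists>c. v = (\<lambda>e. \<Sum>\<omega>\<in>UNIV. c \<omega> * \<pi> \<omega> e))"

definition vderiv :: "(real \<Rightarrow> 'i \<Rightarrow> complex) \<Rightarrow> real \<Rightarrow> 'i \<Rightarrow> complex" where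
  "vderiv f x = (\<lambda>i. vector_derivative (\<lambda>t. f t i) (at x))"

text \<open>QFI of a (normalized) pure-state family f at x.\<close>
definition qfi :: "(real \<Rightarrow> 'i::finite \<Rightarrow> complex) \<Rightarrow> real \<Rightarrow> real" where
  "qfi f x = 4 * (Re (cinner (vderiv f x) (vderiv f x)) - (cmod (cinner (f x) (vderiv f x)))\<^sup>2)"

definition Psi :: "(real \<Rightarrow> ('s::finite \<times> 'e::finite) \<Rightarrow> ('s \<times> 'e) \<Rightarrow> complex) \<Rightarrow>
    ('s \<Rightarrow> complex) \<Rightarrow> ('e \<Rightarrow> complex) \<Rightarrow> real \<Rightarrow> ('s \<times> 'e) \<Rightarrow> complex" where
  "Psi U \<psi> \<phi> x = (\<lambda>a. \<Sum>b\<in>UNIV. U x a b * (\<psi> (fst b) * \<phi> (snd b)))"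

text \<open>Kraus operator M_{\<omega>,x} = <pi_\<omega>| U_x |phi> (partial inner product over E).\<close>
definition kraus :: "(real \<Rightarrow> ('s::finite \<times> 'e::finite) \<Rightarrow> ('s \<times> 'e) \<Rightarrow> complex) \<Rightarrow>
    ('e \<Rightarrow> complex) \<Rightarrow> ('w \<Rightarrow> 'e \<Rightarrow> complex) \<Rightarrow> 'w \<Rightarrow> real \<Rightarrow> 's \<Rightarrow> 's \<Rightarrow> complex" where
  "kraus U \<phi> \<pi> \<omega> x s s' = (\<Sum>e\<in>UNIV. \<Sum>e'\<in>UNIV. cnj (\<pi> \<omega> e) * U x (s, e) (s', e') * \<phi> e')"

definition tpsi :: "(real \<Rightarrow> ('s::finite \<times> 'e::finite) \<Rightarrow> ('s \<times> 'e) \<Rightarrow> complex) \<Rightarrow>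
    ('s \<Rightarrow> complex) \<Rightarrow> ('e \<Rightarrow> complex) \<Rightarrow> ('w \<Rightarrow> 'e \<Rightarrow> complex) \<Rightarrow> 'w \<Rightarrow> real \<Rightarrow> 's \<Rightarrow> complex" where
  "tpsi U \<psi> \<phi> \<pi> \<omega> x = (\<lambda>s. \<Sum>s'\<in>UNIV. kraus U \<phi> \<pi> \<omega> x s s' * \<psi> s')"

definition prob :: "(real \<Rightarrow> ('s::finite \<times> 'e::finite) \<Rightarrow> ('s \<times> 'e) \<Rightarrow> complex) \<Rightarrow>
    ('s \<Rightarrow> complex) \<Rightarrow> ('e \<Rightarrow> complex) \<Rightarrow> ('w \<Rightarrow> 'e \<Rightarrow> complex) \<Rightarrow> 'w \<Rightarrow> real \<Rightarrow> real" where
  "prob U \<psi> \<phi> \<pi> \<omega> x = Re (cinner (tpsi U \<psi> \<phi> \<pi> \<omega> x) (tpsi U \<psi> \<phi> \<pi> \<omega> x))"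

definition npsi :: "(real \<Rightarrow> ('s::finite \<times> 'e::finite) \<Rightarrow> ('s \<times> 'e) \<Rightarrow> complex) \<Rightarrow>
    ('s \<Rightarrow> complex) \<Rightarrow> ('e \<Rightarrow> complex) \<Rightarrow> ('w \<Rightarrow> 'e \<Rightarrow> complex) \<Rightarrow> 'w \<Rightarrow> real \<Rightarrow> 's \<Rightarrow> complex" where
  "npsi U \<psi> \<phi> \<pi> \<omega> t = (\<lambda>s. tpsi U \<psi> \<phi> \<pi> \<omega> t s / complex_of_real (sqrt (prob U \<psi> \<phi> \<pi> \<omega> t)))"

end

theory Submission
  imports Defs
begin

text \<open>Expanding \<open>\<Psi>_x\<close> in the environment basis gives \<open>\<Psi>_x = \<Sum>\<^sub>\<omega> \<psi>(x|\<omega>) \<otimes> \<pi>_\<omega>\<close>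
  with the unnormalized post-measurement states as coefficients, and likewise for the derivative.
  By Parseval \<open>|\<partial>\<Psi>_x|\<^sup>2 = \<Sum>\<^sub>\<omega> |\<partial>\<psi>(x|\<omega>)|\<^sup>2\<close>, so under the gauge condition
  \<open>I\<^sup>Q\<close> is four times this sum, and by (ii) discarded outcomes do not contribute. For a
  retained outcome, (i) makes \<open>p(\<omega>|x)\<close> stationary at \<open>x\<close>, so normalization only rescales
  the derivative by \<open>p(\<omega>|x)\<^sup>-\<^sup>1\<^sup>/\<^sup>2\<close> and \<open>p(\<omega>|x) I(\<sigma>(x|\<omega>)) = 4 |\<partial>\<psi>(x|\<omega>)|\<^sup>2\<close>.\<close>

lemma orthonormal_basisD:
  "orthonormal_basis \<pi> \<Longrightarrow> cinner (\<pi> w) (\<pi> w') = (if w = w' then 1 else 0)"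
  unfolding orthonormal_basis_def by blast

lemma cinner_basis_expansion:
  assumes "orthonormal_basis \<pi>"
  shows "cinner (\<lambda>e. \<Sum>w\<in>UNIV. a w * \<pi> w e) (\<lambda>e. \<Sum>w\<in>UNIV. b w * \<pi> w e)
       = (\<Sum>w\<in>UNIV. cnj (a w) * b w)"
proof -
  have "cinner (\<lambda>e. \<Sum>w\<in>UNIV. a w * \<pi> w e) (\<lambda>e. \<Sum>w\<in>UNIV. b w * \<pi> w e)
     = (\<Sum>e\<in>UNIV. \<Sum>w\<in>UNIV. \<Sum>w'\<in>UNIV. cnj (a w) * b w' * (cnj (\<pi> w e) * \<pi> w' e))"
    unfolding cinner_def by (simp add: sum_distrib_left sum_distrib_right mult_ac)
  also have "\<dots> = (\<Sum>w\<in>UNIV. \<Sum>w'\<in>UNIV. \<Sum>e\<in>UNIV. cnj (a w) * b w' * (cnj (\<pi> w e) * \<pi> w' e))"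
    by (subst sum.swap) (rule sum.cong[OF refl], rule sum.swap)
  also have "\<dots> = (\<Sum>w\<in>UNIV. \<Sum>w'\<in>UNIV. cnj (a w) * b w' * cinner (\<pi> w) (\<pi> w'))"
    unfolding cinner_def by (simp add: sum_distrib_left)
  also have "\<dots> = (\<Sum>w\<in>UNIV. cnj (a w) * b w)"
    by (simp add: orthonormal_basisD[OF assms] if_distrib cong: if_cong)
  finally show ?thesis .
qed

lemma cinner_basis_coefficient:
  assumes "orthonormal_basis \<pi>"
  shows "cinner (\<pi> w) (\<lambda>e. \<Sum>w'\<in>UNIV. c w' * \<pi> w' e) = c w"
proof -
  have "cinner (\<pi> w) (\<lambda>e. \<Sum>w'\<in>UNIV. c w' * \<pi> w' e)
      = (\<Sum>w'\<in>UNIV. \<Sum>e\<in>UNIV. c w' * (cnj (\<pi> w e) * \<pi> w' e))"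
    unfolding cinner_def by (subst sum.swap) (simp add: sum_distrib_left mult_ac)
  also have "\<dots> = (\<Sum>w'\<in>UNIV. c w' * cinner (\<pi> w) (\<pi> w'))"
    unfolding cinner_def by (simp add: sum_distrib_left)
  also have "\<dots> = c w"
    by (simp add: orthonormal_basisD[OF assms] if_distrib cong: if_cong)
  finally show ?thesis .
qed

lemma cinner_scaleR:
  "cinner (\<lambda>s. c *\<^sub>R u s) (\<lambda>s. d *\<^sub>R v s) = (c * d) *\<^sub>R cinner u v"
  unfolding cinner_def by (simp add: scaleR_sum_right scaleR_conv_of_real sum_distrib_left mult_ac)

lemma vderiv_works:
  assumes "\<And>i. (\<lambda>t. f t i) differentiable (at x)"
  shows "((\<lambda>t. f t i) has_vector_derivative vderiv f x i) (at x)"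
  using assms unfolding vderiv_def vector_derivative_works by simp

lemma vderiv_eqI:
  assumes "\<And>i. ((\<lambda>t. f t i) has_vector_derivative f' i) (at x)"
  shows "vderiv f x = f'"
  using assms unfolding vderiv_def by (simp add: vector_derivative_at fun_eq_iff)

lemma cinner_self_has_real_derivative:
  assumes "\<And>i. (\<lambda>t. f t i) differentiable (at x)"
  shows "((\<lambda>t. Re (cinner (f t) (f t))) has_real_derivative 2 * Re (cinner (f x) (vderiv f x))) (at x)"
proof -
  let ?f' = "vderiv f x"
  have "((\<lambda>t. Re (\<Sum>i\<in>UNIV. cnj (f t i) * f t i)) has_vector_derivative
        Re (\<Sum>i\<in>UNIV. cnj (f x i) * ?f' i + cnj (?f' i) * f x i)) (at x)"
    by (intro bounded_linear.has_vector_derivative[OF bounded_linear_Re] has_vector_derivative_sum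
        has_vector_derivative_mult bounded_linear.has_vector_derivative[OF bounded_linear_cnj]
        vderiv_works assms)
  moreover have "(\<Sum>i\<in>UNIV. cnj (?f' i) * f x i) = cnj (cinner (f x) ?f')"
    unfolding cinner_def by (simp add: cnj_sum mult.commute)
  ultimately show ?thesis
    unfolding has_real_derivative_iff_has_vector_derivative cinner_def
    by (simp add: sum.distrib)
qed

lemma qfi_normalized_orthogonal:
  fixes f :: "real \<Rightarrow> 'i::finite \<Rightarrow> complex"
  defines "p \<equiv> \<lambda>t. Re (cinner (f t) (f t))"
  assumes diff: "\<And>i. (\<lambda>t. f t i) differentiable (at x)"
    and orth: "cinner (f x) (vderiv f x) = 0"
    and pos: "p x > 0"
  shows "p x * qfi (\<lambda>t i. f t i / complex_of_real (sqrt (p t))) x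
       = 4 * Re (cinner (vderiv f x) (vderiv f x))"
proof -
  define h where "h = (\<lambda>t. inverse (sqrt (p t)))"
  have "(p has_real_derivative 0) (at x)"
    using cinner_self_has_real_derivative[of f x] diff unfolding p_def orth by simp
  then have h': "(h has_real_derivative 0) (at x)"
    unfolding h_def using pos by (auto intro!: derivative_eq_intros)
  have normalized: "(\<lambda>t i. f t i / complex_of_real (sqrt (p t))) = (\<lambda>t i. h t *\<^sub>R f t i)"
    unfolding h_def by (simp add: scaleR_conv_of_real divide_inverse mult.commute of_real_inverse)
  have "vderiv (\<lambda>t i. h t *\<^sub>R f t i) x = (\<lambda>i. h x *\<^sub>R vderiv f x i)"
    using has_vector_derivative_scaleR[OF h' vderiv_works[OF diff]] by (intro vderiv_eqI) simp
  then have "qfi (\<lambda>t i. f t i / complex_of_real (sqrt (p t))) x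
      = 4 * (h x * h x) * Re (cinner (vderiv f x) (vderiv f x))"
    unfolding qfi_def normalized by (simp add: cinner_scaleR orth)
  moreover have "h x * h x = 1 / p x"
    unfolding h_def using pos by (simp add: divide_inverse inverse_mult_distrib[symmetric])
  ultimately show ?thesis using pos by simp
qed

lemma tpsi_eq_cinner_Psi:
  "tpsi U \<psi> \<phi> \<pi> w t s = cinner (\<pi> w) (\<lambda>e. Psi U \<psi> \<phi> t (s, e))"
proof -
  have "cinner (\<pi> w) (\<lambda>e. Psi U \<psi> \<phi> t (s, e)) =
     (\<Sum>e\<in>UNIV. \<Sum>s'\<in>UNIV. \<Sum>e'\<in>UNIV. cnj (\<pi> w e) * U t (s, e) (s', e') * \<phi> e' * \<psi> s')"
    unfolding cinner_def Psi_def
    by (simp add: sum_distrib_left UNIV_Times_UNIV[symmetric] sum.cartesian_product' mult_ac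
        del: UNIV_Times_UNIV)
  also have "\<dots> = tpsi U \<psi> \<phi> \<pi> w t s"
    unfolding tpsi_def kraus_def by (subst sum.swap) (simp add: sum_distrib_right)
  finally show ?thesis by simp
qed

lemma Psi_basis_expansion:
  assumes "orthonormal_basis \<pi>"
  shows "Psi U \<psi> \<phi> t (s, e) = (\<Sum>w\<in>UNIV. tpsi U \<psi> \<phi> \<pi> w t s * \<pi> w e)"
proof -
  obtain c where c: "(\<lambda>e. Psi U \<psi> \<phi> t (s, e)) = (\<lambda>e. \<Sum>w\<in>UNIV. c w * \<pi> w e)"
    using assms unfolding orthonormal_basis_def by blast
  have "\<And>w. tpsi U \<psi> \<phi> \<pi> w t s = c w"
    unfolding tpsi_eq_cinner_Psi c by (rule cinner_basis_coefficient[OF assms])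
  then show ?thesis using fun_cong[OF c, of e] by simp
qed

lemma tpsi_differentiable:
  assumes "\<And>a b. (\<lambda>t. U t a b) differentiable (at x)"
  shows "(\<lambda>t. tpsi U \<psi> \<phi> \<pi> w t s) differentiable (at x)"
  unfolding tpsi_def kraus_def
  by (intro differentiable_sum ballI differentiable_mult differentiable_const assms finite)

lemma vderiv_Psi_basis_expansion:
  assumes "\<And>a b. (\<lambda>t. U t a b) differentiable (at x)" and "orthonormal_basis \<pi>"
  shows "vderiv (Psi U \<psi> \<phi>) x (s, e) = (\<Sum>w\<in>UNIV. vderiv (tpsi U \<psi> \<phi> \<pi> w) x s * \<pi> w e)"
proof -
  have "((\<lambda>t. \<Sum>w\<in>UNIV. tpsi U \<psi> \<phi> \<pi> w t s * \<pi> w e) has_vector_derivative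
      (\<Sum>w\<in>UNIV. vderiv (tpsi U \<psi> \<phi> \<pi> w) x s * \<pi> w e)) (at x)"
    by (intro derivative_intros vderiv_works tpsi_differentiable[OF assms(1)])
  then show ?thesis
    unfolding vderiv_def Psi_basis_expansion[OF assms(2)] by (rule vector_derivative_at)
qed

lemma cinner_vderiv_Psi:
  assumes "\<And>a b. (\<lambda>t. U t a b) differentiable (at x)" and "orthonormal_basis \<pi>"
  shows "cinner (vderiv (Psi U \<psi> \<phi>) x) (vderiv (Psi U \<psi> \<phi>) x)
       = (\<Sum>w\<in>UNIV. cinner (vderiv (tpsi U \<psi> \<phi> \<pi> w) x) (vderiv (tpsi U \<psi> \<phi> \<pi> w) x))"
proof -
  define T where "T = (\<lambda>w. vderiv (tpsi U \<psi> \<phi> \<pi> w) x)"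
  have "vderiv (Psi U \<psi> \<phi>) x = (\<lambda>(s, e). \<Sum>w\<in>UNIV. T w s * \<pi> w e)"
    unfolding T_def using vderiv_Psi_basis_expansion[OF assms] by (auto simp: fun_eq_iff)
  then have "cinner (vderiv (Psi U \<psi> \<phi>) x) (vderiv (Psi U \<psi> \<phi>) x)
      = (\<Sum>s\<in>UNIV. cinner (\<lambda>e. \<Sum>w\<in>UNIV. T w s * \<pi> w e) (\<lambda>e. \<Sum>w\<in>UNIV. T w s * \<pi> w e))"
    unfolding cinner_def
    by (simp add: UNIV_Times_UNIV[symmetric] sum.cartesian_product' del: UNIV_Times_UNIV)
  also have "\<dots> = (\<Sum>w\<in>UNIV. cinner (T w) (T w))"
    unfolding cinner_basis_expansion[OF assms(2)] cinner_def by (rule sum.swap)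
  finally show ?thesis unfolding T_def .
qed

theorem theorem1:
  fixes U :: "real \<Rightarrow> ('s::finite \<times> 'e::finite) \<Rightarrow> ('s \<times> 'e) \<Rightarrow> complex"
    and \<psi> :: "'s \<Rightarrow> complex" and \<phi> :: "'e \<Rightarrow> complex"
    and \<pi> :: "'w::finite \<Rightarrow> 'e \<Rightarrow> complex"
    and R :: "'w set" and X :: "real set" and x :: real
  assumes "unit_vec \<psi>" and "unit_vec \<phi>"
    and "open X" and "x \<in> X"
    and "\<forall>t\<in>X. unitary_mat (U t)"
    and "\<forall>a b. (\<lambda>t. U t a b) C1_differentiable_on X"
    and "orthonormal_basis \<pi>"
    and gauge: "cinner (Psi U \<psi> \<phi> x) (vderiv (Psi U \<psi> \<phi>) x) = 0"
    and i: "\<forall>\<omega>\<in>R. cinner (tpsi U \<psi> \<phi> \<pi> \<omega> x) (vderiv (tpsi U \<psi> \<phi> \<pi> \<omega>) x) = 0"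
    and ii: "\<forall>\<omega>. \<omega> \<notin> R \<longrightarrow> vderiv (tpsi U \<psi> \<phi> \<pi> \<omega>) x = (\<lambda>s. 0)"
    and pos: "\<forall>\<omega>\<in>R. vderiv (tpsi U \<psi> \<phi> \<pi> \<omega>) x \<noteq> (\<lambda>s. 0) \<longrightarrow> prob U \<psi> \<phi> \<pi> \<omega> x > 0"
  shows "(\<Sum>\<omega>\<in>{\<omega>\<in>R. prob U \<psi> \<phi> \<pi> \<omega> x > 0}.
            prob U \<psi> \<phi> \<pi> \<omega> x * qfi (npsi U \<psi> \<phi> \<pi> \<omega>) x)
         = qfi (Psi U \<psi> \<phi>) x"
proof -
  have diff: "\<And>a b. (\<lambda>t. U t a b) differentiable (at x)"
    using assms(4,6) unfolding C1_differentiable_on_eq by blast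
  define N where "N = (\<lambda>w. 4 * Re (cinner (vderiv (tpsi U \<psi> \<phi> \<pi> w) x) (vderiv (tpsi U \<psi> \<phi> \<pi> w) x)))"
  let ?S = "{\<omega>\<in>R. prob U \<psi> \<phi> \<pi> \<omega> x > 0}"
  have "(\<Sum>\<omega>\<in>?S. prob U \<psi> \<phi> \<pi> \<omega> x * qfi (npsi U \<psi> \<phi> \<pi> \<omega>) x) = (\<Sum>\<omega>\<in>?S. N \<omega>)"
  proof (rule sum.cong)
    fix \<omega> assume "\<omega> \<in> ?S"
    then show "prob U \<psi> \<phi> \<pi> \<omega> x * qfi (npsi U \<psi> \<phi> \<pi> \<omega>) x = N \<omega>"
      unfolding N_def npsi_def prob_def using i diff
      by (intro qfi_normalized_orthogonal tpsi_differentiable) auto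
  qed simp
  also have "\<dots> = (\<Sum>w\<in>UNIV. N w)"
  proof (rule sum.mono_neutral_left)
    show "\<forall>w\<in>UNIV - ?S. N w = 0"
    proof
      fix w assume "w \<in> UNIV - ?S"
      then have "vderiv (tpsi U \<psi> \<phi> \<pi> w) x = (\<lambda>s. 0)" using ii pos by auto
      then show "N w = 0" unfolding N_def cinner_def by simp
    qed
  qed auto
  also have "\<dots> = qfi (Psi U \<psi> \<phi>) x"
    unfolding qfi_def gauge cinner_vderiv_Psi[OF diff assms(7)] N_def by (simp add: sum_distrib_left)
  finally show ?thesis .
qed

end
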